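(* Under the hypotheses of Theorem 2.1.1 (namely: $K\subset\mathbb{C}$ a number field, $\xi\in K$, $s\in\mathbb{Q}_{<0}$, $F\in K[[z]]$ a holonomic Gevrey series of order $s$ of arithmetic type whose associated entire function vanishes at $\sigma(\xi)$ for every embedding $\sigma:K\to\mathbb{C}$), the power series $G\in K[[z]]$ defined by $(z-\xi)G=F$ is a holonomic Gevrey series of order $s$ of arithmetic type.
   Context: Let $K\subset\mathbb{C}$ be a number field. A sequence $(a_n)_{n\ge0}$ in $K$ satisfies condition (G) if there is $C>0$ such that for all $n$: every conjugate of $a_n$ has absolute value $\le C^n$, and there is a positive integer $d_n\le C^n$ with $d_na_0,\dots,d_na_n$ algebraic integers. For $s=p/q\in\mathbb{Q}$ ($q\ge1$, $\gcd(p,q)=1$), $F\in K[[z]]$ is a Gevrey series of order $s$ of arithmetic type if $F=\sum_{n\ge0}(\lfloor n/q\rfloor!)^{p}a_nz^n$ with $(a_n)$ satisfying (G); it is holonomic if annihilated by a nonzero element of $K[z,\frac{d}{dz}]$. *)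

theory Defs
  imports "HOL-Analysis.Analysis" "HOL-Computational_Algebra.Computational_Algebra"
begin

definition number_field :: "complex set \<Rightarrow> bool" where
  "number_field K \<longleftrightarrow>
     0 \<in> K \<and> 1 \<in> K \<and>
     (\<forall>x\<in>K. \<forall>y\<in>K. x + y \<in> K \<and> x * y \<in> K \<and> - x \<in> K) \<and>
     (\<forall>x\<in>K. x \<noteq> 0 \<longrightarrow> inverse x \<in> K) \<and>
     (\<exists>B. finite B \<and> B \<subseteq> K \<and>
        (\<forall>x\<in>K. \<exists>r :: complex \<Rightarrow> rat. x = (\<Sum>b\<in>B. of_rat (r b) * b)))"

text \<open>Field embeddings of K into the complex numbers (only the values on K matter).\<close>
definition embedding :: "complex set \<Rightarrow> (complex \<Rightarrow> complex) \<Rightarrow> bool" where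
  "embedding K \<sigma> \<longleftrightarrow> \<sigma> 1 = 1 \<and>
     (\<forall>x\<in>K. \<forall>y\<in>K. \<sigma> (x + y) = \<sigma> x + \<sigma> y \<and> \<sigma> (x * y) = \<sigma> x * \<sigma> y)"

definition algebraic_integer :: "complex \<Rightarrow> bool" where
  "algebraic_integer x \<longleftrightarrow>
     (\<exists>p :: int poly. lead_coeff p = 1 \<and> poly (map_poly of_int p) x = 0)"

definition condG :: "complex set \<Rightarrow> (nat \<Rightarrow> complex) \<Rightarrow> bool" where
  "condG K a \<longleftrightarrow> (\<forall>n. a n \<in> K) \<and>
     (\<exists>C :: real. C > 0 \<and> (\<forall>n.
        (\<forall>\<sigma>. embedding K \<sigma> \<longrightarrow> norm (\<sigma> (a n)) \<le> C ^ (n + 1)) \<and>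
        (\<exists>d :: nat. d > 0 \<and> real d \<le> C ^ (n + 1) \<and>
            (\<forall>k\<le>n. algebraic_integer (of_nat d * a k)))))"

definition gevrey_arith :: "complex set \<Rightarrow> rat \<Rightarrow> complex fps \<Rightarrow> bool" where
  "gevrey_arith K s F \<longleftrightarrow>
     (case quotient_of s of (p, q) \<Rightarrow>
        (\<exists>a. condG K a \<and>
           (\<forall>n. fps_nth F n = (fact (n div nat q) powi p) * a n)))"

text \<open>Holonomic: annihilated by a nonzero element of K[z, d/dz], written in the
  normal-ordered basis z^i (d/dz)^j.\<close>
definition holonomic :: "complex set \<Rightarrow> complex fps \<Rightarrow> bool" where
  "holonomic K F \<longleftrightarrow>
     (\<exists>m :: nat. \<exists>c :: nat \<Rightarrow> nat \<Rightarrow> complex.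
        (\<forall>i\<le>m. \<forall>j\<le>m. c i j \<in> K) \<and> (\<exists>i\<le>m. \<exists>j\<le>m. c i j \<noteq> 0) \<and>
        (\<Sum>i\<le>m. \<Sum>j\<le>m. fps_const (c i j) * fps_X ^ i * (fps_deriv ^^ j) F) = 0)"

end

theory Submission
  imports Defs "Jordan_Normal_Form.Char_Poly"
begin

no_notation vec_nth (infixl "$" 90) and Matrix.vec_index (infixl "$" 100)

lemma algebraic_integer_iff_algebraic_int: "algebraic_integer x \<longleftrightarrow> algebraic_int x"
  by (auto simp: algebraic_integer_def algebraic_int_altdef_ipoly)

definition int_eigenvector :: "complex \<Rightarrow> 'i set \<Rightarrow> ('i \<Rightarrow> complex) \<Rightarrow> bool" where
  "int_eigenvector z I w \<longleftrightarrow>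
     (\<exists>M :: 'i \<Rightarrow> 'i \<Rightarrow> int. \<forall>i\<in>I. z * w i = (\<Sum>j\<in>I. of_int (M i j) * w j))"

lemma int_eigenvector_reindex:
  assumes h: "bij_betw h I J" and "int_eigenvector z J w"
  shows "int_eigenvector z I (w \<circ> h)"
proof -
  obtain M where M: "\<And>j. j \<in> J \<Longrightarrow> z * w j = (\<Sum>j'\<in>J. of_int (M j j') * w j')"
    using assms(2) unfolding int_eigenvector_def by blast
  have "z * w (h i) = (\<Sum>i'\<in>I. of_int (M (h i) (h i')) * w (h i'))" if "i \<in> I" for i
    using M[of "h i"] bij_betwE[OF h] that
      sum.reindex_bij_betw[OF h, of "\<lambda>j'. of_int (M (h i) j') * w j'"] by simp
  then show ?thesis
    unfolding int_eigenvector_def by (intro exI[of _ "\<lambda>i i'. M (h i) (h i')"]) auto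
qed

lemma algebraic_int_if_int_eigenvector:
  assumes "finite I" "i0 \<in> I" "w i0 \<noteq> 0" "int_eigenvector z I w"
  shows "algebraic_int z"
proof -
  define n where "n = card I"
  obtain h where h: "bij_betw h {0..<n} I"
    using ex_bij_betw_nat_finite[OF assms(1)] unfolding n_def by blast
  obtain M where M: "\<And>i. i < n \<Longrightarrow> z * w (h i) = (\<Sum>j<n. of_int (M i j) * w (h j))"
    using int_eigenvector_reindex[OF h assms(4)] unfolding int_eigenvector_def
    by (auto simp: atLeast0LessThan)
  define A :: "int mat" where "A = mat n n (\<lambda>(i, j). M i j)"
  define v where "v = vec n (\<lambda>i. w (h i))"
  have A: "A \<in> carrier_mat n n" and A': "map_mat of_int A \<in> carrier_mat n n"
    by (simp_all add: A_def)
  have "v \<noteq> 0\<^sub>v n"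
  proof
    assume "v = 0\<^sub>v n"
    moreover obtain k where "k < n" "h k = i0"
      using h assms(2) by (force simp: bij_betw_def)
    ultimately show False using assms(3) by (metis index_vec index_zero_vec(1) v_def)
  qed
  moreover have "map_mat of_int A *\<^sub>v v = z \<cdot>\<^sub>v v"
    by (rule eq_vecI) (auto simp: A_def v_def M scalar_prod_def atLeast0LessThan)
  moreover have "v \<in> carrier_vec n"
    by (simp add: v_def)
  ultimately have "eigenvalue (map_mat of_int A) z"
    unfolding eigenvalue_def eigenvector_def using A' by blast
  then have "poly (char_poly (map_mat of_int A)) z = 0"
    using eigenvalue_root_char_poly[OF A'] by blast
  then have "poly (map_poly of_int (char_poly A)) z = 0"
    by (simp only: of_int_hom.char_poly_hom[OF A])
  moreover have "lead_coeff (char_poly A) = 1"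
    using degree_monic_char_poly[OF A] by simp
  ultimately show ?thesis
    unfolding algebraic_int_altdef_ipoly by blast
qed

lemma int_eigenvector_powers:
  assumes "algebraic_int x"
  obtains n where "n > 0" "int_eigenvector x {..<n} (\<lambda>i. x ^ i)"
proof -
  obtain p :: "int poly" where p: "lead_coeff p = 1" "poly (map_poly of_int p) x = 0"
    using assms unfolding algebraic_int_altdef_ipoly by blast
  define n where "n = degree p"
  have "n > 0"
    using p by (cases "degree p") (auto simp: n_def elim!: degree_eq_zeroE)
  have "(\<Sum>j<n. of_int (coeff p j) * x ^ j) + x ^ n = 0"
    using p by (simp add: poly_altdef degree_map_poly n_def atMost_Suc lessThan_Suc_atMost[symmetric])
  then have xn: "x ^ n = (\<Sum>j<n. of_int (- coeff p j) * x ^ j)"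
    by (simp add: sum_negf eq_neg_iff_add_eq_0 add.commute)
  define M where "M i j = (if Suc i < n then if j = Suc i then 1 else 0 else - coeff p j)" for i j
  have "x * x ^ i = (\<Sum>j<n. of_int (M i j) * x ^ j)" if "i < n" for i
  proof (cases "Suc i < n")
    case True
    then have "(\<Sum>j<n. of_int (M i j) * x ^ j) = (\<Sum>j<n. if j = Suc i then x ^ j else 0)"
      by (intro sum.cong) (auto simp: M_def)
    with True show ?thesis by simp
  next
    case False
    with that have "Suc i = n" by simp
    then have "x * x ^ i = x ^ n" by auto
    with xn False show ?thesis by (simp add: M_def)
  qed
  then have "int_eigenvector x {..<n} (\<lambda>i. x ^ i)"
    unfolding int_eigenvector_def by (intro exI[of _ M]) auto
  with \<open>n > 0\<close> show thesis by (rule that)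
qed

lemma int_eigenvector_add:
  assumes "int_eigenvector x I w" "int_eigenvector y I w"
  shows "int_eigenvector (x + y) I w"
proof -
  obtain M1 M2 where "\<forall>i\<in>I. x * w i = (\<Sum>j\<in>I. of_int (M1 i j) * w j)"
    "\<forall>i\<in>I. y * w i = (\<Sum>j\<in>I. of_int (M2 i j) * w j)"
    using assms unfolding int_eigenvector_def by blast
  then show ?thesis
    unfolding int_eigenvector_def
    by (intro exI[of _ "\<lambda>i j. M1 i j + M2 i j"]) (simp add: distrib_right sum.distrib)
qed

lemma int_eigenvector_mult:
  assumes "int_eigenvector x I w" "int_eigenvector y I w"
  shows "int_eigenvector (x * y) I w"
proof -
  obtain M1 M2 where M1: "\<forall>i\<in>I. x * w i = (\<Sum>j\<in>I. of_int (M1 i j) * w j)"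
    and M2: "\<forall>i\<in>I. y * w i = (\<Sum>j\<in>I. of_int (M2 i j) * w j)"
    using assms unfolding int_eigenvector_def by blast
  have "x * y * w i = (\<Sum>k\<in>I. of_int (\<Sum>j\<in>I. M2 i j * M1 j k) * w k)" if "i \<in> I" for i
  proof -
    have "x * y * w i = x * (\<Sum>j\<in>I. of_int (M2 i j) * w j)"
      by (simp only: mult.assoc M2[rule_format, OF that])
    also have "\<dots> = (\<Sum>j\<in>I. of_int (M2 i j) * (x * w j))"
      by (simp add: sum_distrib_left mult.left_commute)
    also have "\<dots> = (\<Sum>j\<in>I. of_int (M2 i j) * (\<Sum>k\<in>I. of_int (M1 j k) * w k))"
      using M1 by (intro sum.cong) auto
    also have "\<dots> = (\<Sum>j\<in>I. \<Sum>k\<in>I. of_int (M2 i j * M1 j k) * w k)"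
      by (simp add: sum_distrib_left mult.assoc)
    also have "\<dots> = (\<Sum>k\<in>I. of_int (\<Sum>j\<in>I. M2 i j * M1 j k) * w k)"
      by (subst sum.swap) (simp add: sum_distrib_right)
    finally show ?thesis .
  qed
  then show ?thesis
    unfolding int_eigenvector_def by (intro exI[of _ "\<lambda>i k. \<Sum>j\<in>I. M2 i j * M1 j k"]) blast
qed

lemma int_eigenvector_tensor:
  fixes v :: "'i \<Rightarrow> complex" and w :: "'j \<Rightarrow> complex"
  assumes "int_eigenvector x I v" "finite J"
  shows "int_eigenvector x (I \<times> J) (\<lambda>p. v (fst p) * w (snd p))"
proof -
  obtain M where M: "\<forall>i\<in>I. x * v i = (\<Sum>i'\<in>I. of_int (M i i') * v i')"
    using assms(1) unfolding int_eigenvector_def by blast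
  define M' :: "'i \<times> 'j \<Rightarrow> 'i \<times> 'j \<Rightarrow> int" where "M' p q = (if snd q = snd p then M (fst p) (fst q) else 0)" for p q
  have "x * (v i * w j) = (\<Sum>q\<in>I \<times> J. of_int (M' (i, j) q) * (v (fst q) * w (snd q)))"
    if "i \<in> I" "j \<in> J" for i j
  proof -
    have "(\<Sum>q\<in>I \<times> J. of_int (M' (i, j) q) * (v (fst q) * w (snd q)))
        = (\<Sum>i'\<in>I. \<Sum>j'\<in>J. of_int (M' (i, j) (i', j')) * (v i' * w j'))"
      by (simp add: sum.cartesian_product case_prod_unfold)
    also have "\<dots> = (\<Sum>i'\<in>I. \<Sum>j'\<in>J. if j' = j then of_int (M i i') * v i' * w j else 0)"
      by (intro sum.cong refl) (simp add: M'_def)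
    also have "\<dots> = (\<Sum>i'\<in>I. of_int (M i i') * v i') * w j"
      using that assms(2) by (simp add: sum_distrib_right)
    finally show ?thesis
      using M that by simp
  qed
  then show ?thesis
    unfolding int_eigenvector_def by (intro exI[of _ M']) auto
qed

lemma algebraic_int_add_mult:
  fixes x y :: complex
  assumes "algebraic_int x" "algebraic_int y"
  shows "algebraic_int (x + y)" and "algebraic_int (x * y)"
proof -
  obtain m where m: "m > 0" "int_eigenvector x {..<m} (\<lambda>i. x ^ i)"
    using int_eigenvector_powers[OF assms(1)] by blast
  obtain n where n: "n > 0" "int_eigenvector y {..<n} (\<lambda>j. y ^ j)"
    using int_eigenvector_powers[OF assms(2)] by blast
  define w where "w p = x ^ fst p * y ^ snd p" for p
  have x: "int_eigenvector x ({..<m} \<times> {..<n}) w"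
    unfolding w_def by (rule int_eigenvector_tensor[OF m(2)]) simp
  have "bij_betw prod.swap ({..<m} \<times> {..<n}) ({..<n} \<times> {..<m})"
    using bij_betw_subset[OF bij_swap, of "{..<m} \<times> {..<n}"] by (simp add: product_swap)
  then have "int_eigenvector y ({..<m} \<times> {..<n}) ((\<lambda>p. y ^ fst p * x ^ snd p) \<circ> prod.swap)"
    by (rule int_eigenvector_reindex) (rule int_eigenvector_tensor[OF n(2)], simp)
  then have y: "int_eigenvector y ({..<m} \<times> {..<n}) w"
    unfolding w_def by (simp add: comp_def mult.commute)
  have fin: "finite ({..<m} \<times> {..<n})" and w0: "(0, 0) \<in> {..<m} \<times> {..<n}" "w (0, 0) \<noteq> 0"
    using m n by (simp_all add: w_def)
  show "algebraic_int (x + y)"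
    by (rule algebraic_int_if_int_eigenvector[OF fin w0 int_eigenvector_add[OF x y]])
  show "algebraic_int (x * y)"
    by (rule algebraic_int_if_int_eigenvector[OF fin w0 int_eigenvector_mult[OF x y]])
qed

lemma algebraic_int_sum:
  fixes f :: "'i \<Rightarrow> complex"
  shows "(\<And>i. i \<in> A \<Longrightarrow> algebraic_int (f i)) \<Longrightarrow> algebraic_int (\<Sum>i\<in>A. f i)"
  by (induction A rule: infinite_finite_induct) (auto intro: algebraic_int_add_mult)

lemma algebraic_int_power: "algebraic_int (x :: complex) \<Longrightarrow> algebraic_int (x ^ n)"
  by (induction n) (auto intro: algebraic_int_add_mult)

lemma card_prime_power_divisors:
  fixes p m M :: nat
  assumes p: "prime p" and "0 < m" "m \<le> M"
  shows "card {j\<in>{1..M}. p ^ j dvd m} = multiplicity p m"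
proof -
  have "\<not> is_unit p"
    using p not_prime_unit by blast
  have "multiplicity p m < 2 ^ multiplicity p m"
    by (rule less_exp)
  also have "\<dots> \<le> p ^ multiplicity p m"
    using prime_ge_2_nat[OF p] by (rule power_mono) simp
  also have "\<dots> \<le> m"
    using \<open>0 < m\<close> by (intro dvd_imp_le multiplicity_dvd)
  finally have "multiplicity p m \<le> M"
    using \<open>m \<le> M\<close> by linarith
  have "p ^ j dvd m \<longleftrightarrow> j \<le> multiplicity p m" for j
    using power_dvd_iff_le_multiplicity[of m p j] \<open>0 < m\<close> \<open>\<not> is_unit p\<close> by simp
  then have "{j\<in>{1..M}. p ^ j dvd m} = {j\<in>{1..M}. j \<le> multiplicity p m}"
    by (simp only:)
  also have "\<dots> = {1..multiplicity p m}"
    using \<open>multiplicity p m \<le> M\<close> by auto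
  finally show ?thesis
    by simp
qed

lemma multiplicity_fact_nat:
  fixes p N M :: nat
  assumes p: "prime p" and "N \<le> M"
  shows "multiplicity p (fact N :: nat) = (\<Sum>j\<in>{1..M}. N div p ^ j)"
  using \<open>N \<le> M\<close>
proof (induction N)
  case (Suc N)
  have "Suc N div p ^ j = N div p ^ j + (if p ^ j dvd Suc N then 1 else 0)" for j
    by (auto simp: div_Suc dvd_eq_mod_eq_0)
  then have "(\<Sum>j\<in>{1..M}. Suc N div p ^ j)
      = card {j\<in>{1..M}. p ^ j dvd Suc N} + (\<Sum>j\<in>{1..M}. N div p ^ j)"
    by (simp add: sum.distrib sum.If_cases Int_def)
  also have "\<dots> = multiplicity p (Suc N) + multiplicity p (fact N :: nat)"
    using Suc card_prime_power_divisors[OF p, of "Suc N" M] by simp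
  also have "\<dots> = multiplicity p (Suc N * fact N :: nat)"
    using p by (subst prime_elem_multiplicity_mult_distrib) auto
  also have "Suc N * fact N = (fact (Suc N) :: nat)"
    by simp
  finally show ?case ..
qed (simp add: multiplicity_one)

lemma prime_dvd_central_binomial:
  fixes p n e :: nat
  assumes p: "prime p" and "n < p ^ e" "p ^ e \<le> 2 * n"
  shows "p dvd (2 * n choose n)"
proof -
  have "e < 2 ^ e"
    by (rule less_exp)
  also have "\<dots> \<le> p ^ e"
    using prime_ge_2_nat[OF p] by (simp add: power_mono)
  finally have "e \<in> {1..2 * n}"
    using assms(2,3) by (cases e) auto
  \<comment> \<open>in Legendre's formula every term of (2n)! is at least twice that of n!, and the e-th exceeds it\<close>
  have term_le: "2 * (n div p ^ j) \<le> 2 * n div p ^ j" for j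
    using div_add1_eq[of n n "p ^ j"] by (simp add: mult_2)
  have "2 * n div p ^ e = 1"
    using assms(2,3) by (intro div_nat_eqI) auto
  then have term_less: "2 * (n div p ^ e) < 2 * n div p ^ e"
    using assms(2) by simp
  have "2 * multiplicity p (fact n :: nat) = (\<Sum>j\<in>{1..2 * n}. 2 * (n div p ^ j))"
    by (simp add: multiplicity_fact_nat[OF p, of n "2 * n"] sum_distrib_left)
  also have "\<dots> < (\<Sum>j\<in>{1..2 * n}. 2 * n div p ^ j)"
    using \<open>e \<in> {1..2 * n}\<close> term_le term_less by (intro sum_strict_mono_ex1) auto
  also have "\<dots> = multiplicity p (fact (2 * n) :: nat)"
    by (rule multiplicity_fact_nat[OF p, symmetric]) simp
  also have "(fact (2 * n) :: nat) = fact n * fact n * (2 * n choose n)"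
    using binomial_fact_lemma[of n "2 * n"] by simp
  also have "multiplicity p \<dots> = 2 * multiplicity p (fact n :: nat) + multiplicity p (2 * n choose n)"
    using p by (simp add: prime_elem_multiplicity_mult_distrib)
  finally have "multiplicity p (2 * n choose n) > 0"
    by simp
  then show ?thesis
    using p by (simp add: prime_multiplicity_gt_zero_iff)
qed

lemma dvd_Lcm_atLeastAtMost_mult_central_binomial:
  fixes m n :: nat
  assumes "1 \<le> m" "m \<le> 2 * n"
  shows "m dvd Lcm {1..n} * (2 * n choose n)"
proof (rule multiplicity_le_imp_dvd)
  show "m \<noteq> 0"
    using assms by simp
  fix p :: nat
  assume p: "prime p"
  define e where "e = multiplicity p m"
  have "p ^ e \<le> 2 * n"
    using assms dvd_imp_le[OF multiplicity_dvd[of p m]] unfolding e_def by linarith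
  have "p ^ e dvd Lcm {1..n} * (2 * n choose n)"
  proof (cases "p ^ e \<le> n")
    case True
    then show ?thesis
      using p by (intro dvd_mult2 dvd_Lcm) (simp add: Suc_leI prime_gt_0_nat)
  next
    case False
    then obtain e' where e': "e = Suc e'"
      using \<open>p ^ e \<le> 2 * n\<close> by (cases e) auto
    have "2 * p ^ e' \<le> p ^ e"
      using prime_ge_2_nat[OF p] by (simp add: e')
    then have "p ^ e' dvd Lcm {1..n}"
      using \<open>p ^ e \<le> 2 * n\<close> p by (intro dvd_Lcm) (simp add: Suc_leI prime_gt_0_nat)
    moreover have "p dvd (2 * n choose n)"
      using False \<open>p ^ e \<le> 2 * n\<close> by (intro prime_dvd_central_binomial[OF p]) simp_all
    moreover have "p ^ e = p ^ e' * p"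
      by (simp add: e')
    ultimately show ?thesis
      by (simp only: mult_dvd_mono)
  qed
  then show "multiplicity p m \<le> multiplicity p (Lcm {1..n} * (2 * n choose n))"
    using p power_dvd_iff_le_multiplicity[of "Lcm {1..n} * (2 * n choose n)" p e]
    by (simp add: e_def prime_nat_iff)
qed

lemma Lcm_atLeastAtMost_pos: "0 < Lcm {1..n :: nat}"
  by (rule gr0I) simp

lemma Lcm_atLeastAtMost_double_le: "Lcm {1..2 * n} \<le> Lcm {1..n} * 4 ^ n"
proof -
  have "Lcm {1..2 * n} dvd Lcm {1..n} * (2 * n choose n)"
    by (rule Lcm_least) (rule dvd_Lcm_atLeastAtMost_mult_central_binomial; simp)
  then have "Lcm {1..2 * n} \<le> Lcm {1..n} * (2 * n choose n)"
    using Lcm_atLeastAtMost_pos by (intro dvd_imp_le) auto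
  also have "(2 * n choose n) \<le> 4 ^ n"
    using binomial_le_pow2[of "2 * n" n] by (simp add: power_mult)
  finally show ?thesis
    by simp
qed

lemma Lcm_atLeastAtMost_le: "Lcm {1..N} \<le> (16 :: nat) ^ N"
proof (induction N rule: less_induct)
  case (less N)
  show ?case
  proof (cases "N \<le> 1")
    case True
    then show ?thesis by (cases N) auto
  next
    case False
    define n where "n = Suc N div 2"
    have "n < N" "N \<le> 2 * n" "3 * n \<le> 2 * N"
      using False by (auto simp: n_def)
    have "Lcm {1..N} \<le> Lcm {1..2 * n}"
      using \<open>N \<le> 2 * n\<close> Lcm_atLeastAtMost_pos by (intro dvd_imp_le Lcm_subset) auto
    also have "\<dots> \<le> Lcm {1..n} * 4 ^ n"
      by (rule Lcm_atLeastAtMost_double_le)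
    also have "\<dots> \<le> 16 ^ n * 4 ^ n"
      using less.IH[OF \<open>n < N\<close>] by simp
    also have "\<dots> = 4 ^ (3 * n)"
      by (simp add: power_mult power_mult_distrib[symmetric])
    also have "\<dots> \<le> 4 ^ (2 * N)"
      using \<open>3 * n \<le> 2 * N\<close> by (intro power_increasing) auto
    finally show ?thesis
      by (simp add: power_mult)
  qed
qed

lemma norm_eigenvalue_le:
  fixes M :: "'i \<Rightarrow> 'i \<Rightarrow> 'a :: real_normed_field"
  assumes "finite I" "i0 \<in> I" "w i0 \<noteq> 0" and ev: "\<And>i. i \<in> I \<Longrightarrow> z * w i = (\<Sum>j\<in>I. M i j * w j)"
  shows "norm z \<le> (\<Sum>i\<in>I. \<Sum>j\<in>I. norm (M i j))"
proof -
  \<comment> \<open>evaluate the eigenvalue equation at a coordinate of maximal norm\<close>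
  define m where "m = Max ((\<lambda>j. norm (w j)) ` I)"
  have "m \<in> (\<lambda>j. norm (w j)) ` I"
    unfolding m_def using assms(1,2) by (intro Max_in) auto
  then obtain i where i: "i \<in> I" "norm (w i) = m"
    by blast
  have max: "norm (w j) \<le> norm (w i)" if "j \<in> I" for j
    unfolding i(2) m_def using assms(1) that by (intro Max_ge) auto
  have "0 < norm (w i0)"
    using assms(3) by simp
  then have "0 < norm (w i)"
    using max[OF assms(2)] by (rule order.strict_trans2)
  have "norm z * norm (w i) = norm (\<Sum>j\<in>I. M i j * w j)"
    by (simp only: norm_mult[symmetric] ev[OF i(1)])
  also have "\<dots> \<le> (\<Sum>j\<in>I. norm (M i j) * norm (w j))"
    by (rule order_trans[OF norm_sum]) (simp add: norm_mult)
  also have "\<dots> \<le> (\<Sum>j\<in>I. norm (M i j)) * norm (w i)"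
    by (simp add: sum_distrib_right max mult_left_mono sum_mono)
  finally have "norm z \<le> (\<Sum>j\<in>I. norm (M i j))"
    using \<open>0 < norm (w i)\<close> by simp
  also have "\<dots> \<le> (\<Sum>i\<in>I. \<Sum>j\<in>I. norm (M i j))"
    using i assms(1) by (intro member_le_sum sum_nonneg) auto
  finally show ?thesis .
qed

context
  fixes K :: "complex set"
  assumes K: "number_field K"
begin

lemma number_field_0: "0 \<in> K"
  using K unfolding number_field_def by blast

lemma number_field_1: "1 \<in> K"
  using K unfolding number_field_def by blast

lemma number_field_add: "x \<in> K \<Longrightarrow> y \<in> K \<Longrightarrow> x + y \<in> K"
  using K unfolding number_field_def by blast

lemma number_field_mult: "x \<in> K \<Longrightarrow> y \<in> K \<Longrightarrow> x * y \<in> K"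
  using K unfolding number_field_def by blast

lemma number_field_minus: "x \<in> K \<Longrightarrow> - x \<in> K"
  using K unfolding number_field_def by (metis add.right_neutral)

lemma number_field_inverse:
  assumes "x \<in> K"
  shows "inverse x \<in> K"
proof (cases "x = 0")
  case False
  then show ?thesis
    using K assms unfolding number_field_def by blast
qed (simp add: number_field_0)

lemma number_field_diff: "x \<in> K \<Longrightarrow> y \<in> K \<Longrightarrow> x - y \<in> K"
  using number_field_add[of x "- y"] number_field_minus[of y] by simp

lemma number_field_divide: "x \<in> K \<Longrightarrow> y \<in> K \<Longrightarrow> x / y \<in> K"
  using number_field_mult[of x "inverse y"] number_field_inverse[of y] by (simp add: divide_inverse)

lemma number_field_of_nat: "of_nat n \<in> K"
  by (induction n) (auto intro: number_field_0 number_field_add number_field_1)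

lemma number_field_of_int: "of_int n \<in> K"
proof (cases "0 \<le> n")
  case True
  then have "of_int n = (of_nat (nat n) :: complex)"
    by simp
  then show ?thesis
    using number_field_of_nat by metis
next
  case False
  then have "of_int n = - (of_nat (nat (- n)) :: complex)"
    by simp
  then show ?thesis
    using number_field_minus[OF number_field_of_nat] by metis
qed

lemma number_field_power: "x \<in> K \<Longrightarrow> x ^ n \<in> K"
  by (induction n) (auto intro: number_field_1 number_field_mult)

lemma number_field_sum:
  assumes "\<And>i. i \<in> A \<Longrightarrow> f i \<in> K"
  shows "(\<Sum>i\<in>A. f i) \<in> K"
  using assms
proof (induction A rule: infinite_finite_induct)
  case (insert x F)
  then have "f x \<in> K" "(\<Sum>i\<in>F. f i) \<in> K"
    by blast+
  with insert.hyps show ?case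
    by (simp add: number_field_add)
qed (simp_all add: number_field_0)


context
  fixes \<sigma> :: "complex \<Rightarrow> complex"
  assumes \<sigma>: "embedding K \<sigma>"
begin

lemma embedding_1: "\<sigma> 1 = 1"
  and embedding_add: "x \<in> K \<Longrightarrow> y \<in> K \<Longrightarrow> \<sigma> (x + y) = \<sigma> x + \<sigma> y"
  and embedding_mult: "x \<in> K \<Longrightarrow> y \<in> K \<Longrightarrow> \<sigma> (x * y) = \<sigma> x * \<sigma> y"
  using \<sigma> unfolding embedding_def by auto

lemma embedding_0: "\<sigma> 0 = 0"
  using embedding_add[OF number_field_0 number_field_0] by simp

lemma embedding_minus: "x \<in> K \<Longrightarrow> \<sigma> (- x) = - \<sigma> x"
  using embedding_add[of x "- x"] number_field_minus[of x] embedding_0 by (simp add: add_eq_0_iff)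

lemma embedding_diff: "x \<in> K \<Longrightarrow> y \<in> K \<Longrightarrow> \<sigma> (x - y) = \<sigma> x - \<sigma> y"
  using embedding_add[of x "- y"] embedding_minus[of y] number_field_minus[of y] by simp

lemma embedding_of_nat: "\<sigma> (of_nat n) = of_nat n"
  by (induction n) (simp_all add: embedding_0 embedding_add[OF number_field_1 number_field_of_nat] embedding_1)

lemma embedding_of_int: "\<sigma> (of_int n) = of_int n"
proof (cases "0 \<le> n")
  case True
  then have "of_int n = (of_nat (nat n) :: complex)"
    by simp
  then show ?thesis
    using embedding_of_nat by metis
next
  case False
  then have "of_int n = - (of_nat (nat (- n)) :: complex)"
    by simp
  then show ?thesis
    using embedding_minus[OF number_field_of_nat] embedding_of_nat by metis
qed

lemma embedding_sum:
  assumes "\<And>i. i \<in> A \<Longrightarrow> f i \<in> K"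
  shows "\<sigma> (\<Sum>i\<in>A. f i) = (\<Sum>i\<in>A. \<sigma> (f i))"
  using assms
proof (induction A rule: infinite_finite_induct)
  case (insert x F)
  then have "f x \<in> K" "(\<Sum>i\<in>F. f i) \<in> K" "\<sigma> (\<Sum>i\<in>F. f i) = (\<Sum>i\<in>F. \<sigma> (f i))"
    by (blast intro: number_field_sum)+
  with insert.hyps show ?case
    by (simp add: embedding_add)
qed (simp_all add: embedding_0)

end

lemma number_field_spanning_set:
  obtains B where "finite B" "B \<subseteq> K" "1 \<in> B"
    "\<And>y. y \<in> K \<Longrightarrow> \<exists>r :: complex \<Rightarrow> rat. y = (\<Sum>b\<in>B. of_rat (r b) * b)"
proof -
  obtain B where B: "finite B" "B \<subseteq> K" "\<forall>y\<in>K. \<exists>r :: complex \<Rightarrow> rat. y = (\<Sum>b\<in>B. of_rat (r b) * b)"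
    using K unfolding number_field_def by blast
  have span: "\<exists>r :: complex \<Rightarrow> rat. y = (\<Sum>b\<in>insert 1 B. of_rat (r b) * b)" if yK: "y \<in> K" for y
  proof -
    obtain r where y: "y = (\<Sum>b\<in>B. of_rat (r b) * b)"
      using bspec[OF B(3) yK] by (elim exE)
    show ?thesis
    proof (cases "1 \<in> B")
      case True
      then have "insert 1 B = B"
        by blast
      with y show ?thesis
        by (intro exI[of _ r]) simp
    next
      case False
      have "(\<Sum>b\<in>insert 1 B. of_rat ((r(1 := 0)) b) * b) = (\<Sum>b\<in>B. of_rat ((r(1 := 0)) b) * b)"
        using B(1) False by simp
      also have "\<dots> = y"
        unfolding y using False by (intro sum.cong) auto
      finally have "y = (\<Sum>b\<in>insert 1 B. of_rat ((r(1 := 0)) b) * b)"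
        by (rule sym)
      then show ?thesis
        by (rule exI[of _ "r(1 := 0)"])
    qed
  qed
  show thesis
  proof (rule that[of "insert 1 B"])
    show "finite (insert 1 B)" "insert 1 B \<subseteq> K" "1 \<in> insert 1 B"
      using B(1,2) number_field_1 by simp_all
  qed (rule span)
qed

lemma rat_common_denominator:
  fixes S :: "rat set"
  assumes "finite S"
  obtains D :: nat where "D > 0" "\<And>r. r \<in> S \<Longrightarrow> of_nat D * r \<in> \<int>"
proof -
  define den where "den r = snd (quotient_of r)" for r
  have den_pos: "den r > 0" for r
    unfolding den_def using quotient_of_denom_pos' .
  have den_mult: "of_int (den r) * r \<in> \<int>" for r
  proof -
    obtain a b where "quotient_of r = (a, b)"
      by fastforce
    then show ?thesis
      using quotient_of_denom_pos[of r a b] quotient_of_div[of r a b] by (simp add: den_def)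
  qed
  define D where "D = nat (\<Prod>r\<in>S. den r)"
  have D: "of_nat D = (of_int (\<Prod>r\<in>S. den r) :: rat)"
    using den_pos by (simp add: D_def less_imp_le prod_nonneg)
  show thesis
  proof
    show "D > 0"
      using den_pos by (simp add: D_def prod_pos)
    fix r assume "r \<in> S"
    have "of_nat D * r = of_int (\<Prod>s\<in>S. den s) * r"
      by (simp only: D)
    also have "(\<Prod>s\<in>S. den s) = den r * (\<Prod>s\<in>S - {r}. den s)"
      using assms \<open>r \<in> S\<close> by (rule prod.remove)
    also have "of_int (den r * (\<Prod>s\<in>S - {r}. den s)) * r = of_int (\<Prod>s\<in>S - {r}. den s) * (of_int (den r) * r)"
      by (simp add: mult_ac)
    finally show "of_nat D * r \<in> \<int>"
      using den_mult[of r] by (metis Ints_mult Ints_of_int)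
  qed
qed

lemma number_field_int_matrix:
  assumes "x \<in> K"
  obtains B D Z where "finite B" "B \<subseteq> K" "1 \<in> B" "D > 0"
    "\<And>b. b \<in> B \<Longrightarrow> of_nat D * x * b = (\<Sum>b'\<in>B. of_int (Z b b') * b')"
proof -
  obtain B where B: "finite B" "B \<subseteq> K" "1 \<in> B"
    and span: "\<And>y. y \<in> K \<Longrightarrow> \<exists>r :: complex \<Rightarrow> rat. y = (\<Sum>b\<in>B. of_rat (r b) * b)"
    using number_field_spanning_set by blast
  have "\<forall>b\<in>B. \<exists>r :: complex \<Rightarrow> rat. x * b = (\<Sum>b'\<in>B. of_rat (r b') * b')"
    using B(2) assms span number_field_mult by blast
  then obtain R where R: "\<And>b. b \<in> B \<Longrightarrow> x * b = (\<Sum>b'\<in>B. of_rat (R b b') * b')"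
    by metis
  obtain D where D: "D > 0" "\<And>r. r \<in> (\<lambda>(b, b'). R b b') ` (B \<times> B) \<Longrightarrow> of_nat D * r \<in> \<int>"
    using rat_common_denominator[of "(\<lambda>(b, b'). R b b') ` (B \<times> B)"] B(1) by blast
  have "\<forall>b\<in>B. \<forall>b'\<in>B. \<exists>z. of_nat D * R b b' = of_int z"
    using D(2) by (blast elim: Ints_cases)
  then obtain Z where Z: "\<forall>b\<in>B. \<forall>b'\<in>B. of_nat D * R b b' = of_int (Z b b')"
    by metis
  have "of_nat D * x * b = (\<Sum>b'\<in>B. of_int (Z b b') * b')" if "b \<in> B" for b
  proof -
    have "of_nat D * x * b = of_nat D * (\<Sum>b'\<in>B. of_rat (R b b') * b')"
      by (simp only: mult.assoc R[OF that])
    also have "\<dots> = (\<Sum>b'\<in>B. of_rat (of_nat D * R b b') * b')"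
      by (simp add: sum_distrib_left of_rat_mult mult.assoc)
    also have "\<dots> = (\<Sum>b'\<in>B. of_int (Z b b') * b')"
      using Z that by (intro sum.cong) auto
    finally show ?thesis .
  qed
  with B D(1) show thesis
    by (rule that)
qed

lemma number_field_denominator:
  assumes "x \<in> K"
  obtains D :: nat where "D > 0" "algebraic_int (of_nat D * x)"
proof -
  obtain B D Z where "finite B" "1 \<in> B" "D > 0"
    and Z: "\<And>b. b \<in> B \<Longrightarrow> of_nat D * x * b = (\<Sum>b'\<in>B. of_int (Z b b') * b')"
    using number_field_int_matrix[OF assms] by metis
  moreover have "int_eigenvector (of_nat D * x) B (\<lambda>b. b)"
    unfolding int_eigenvector_def using Z by blast
  ultimately show thesis
    using algebraic_int_if_int_eigenvector[of B 1 "\<lambda>b. b"] that by simp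
qed

lemma number_field_conjugates_bounded:
  assumes "x \<in> K"
  obtains T where "\<And>\<sigma>. embedding K \<sigma> \<Longrightarrow> norm (\<sigma> x) \<le> T"
proof -
  obtain B D Z where B: "finite B" "B \<subseteq> K" "1 \<in> B" and "D > 0"
    and Z: "\<And>b. b \<in> B \<Longrightarrow> of_nat D * x * b = (\<Sum>b'\<in>B. of_int (Z b b') * b')"
    using number_field_int_matrix[OF assms] by metis
  have "norm (\<sigma> x) \<le> (\<Sum>b\<in>B. \<Sum>b'\<in>B. norm (of_int (Z b b') :: complex)) / D"
    if \<sigma>: "embedding K \<sigma>" for \<sigma>
  proof -
    have "of_nat D * \<sigma> x * \<sigma> b = (\<Sum>b'\<in>B. of_int (Z b b') * \<sigma> b')" if "b \<in> B" for b
    proof -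
      have bK: "b \<in> K" and DxK: "of_nat D * x \<in> K"
        using B(2) that assms by (auto intro: number_field_mult number_field_of_nat)
      have "of_nat D * \<sigma> x * \<sigma> b = \<sigma> (of_nat D * x * b)"
        using embedding_mult[OF \<sigma> DxK bK] embedding_mult[OF \<sigma> number_field_of_nat assms]
        by (simp add: embedding_of_nat[OF \<sigma>])
      also have "\<dots> = (\<Sum>b'\<in>B. \<sigma> (of_int (Z b b') * b'))"
        unfolding Z[OF that] using B(2) by (intro embedding_sum[OF \<sigma>]) (auto intro: number_field_mult number_field_of_int)
      also have "\<dots> = (\<Sum>b'\<in>B. of_int (Z b b') * \<sigma> b')"
        using B(2) by (intro sum.cong refl) (auto simp: embedding_mult[OF \<sigma>] embedding_of_int[OF \<sigma>] number_field_of_int)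
      finally show ?thesis .
    qed
    then have "norm (of_nat D * \<sigma> x) \<le> (\<Sum>b\<in>B. \<Sum>b'\<in>B. norm (of_int (Z b b') :: complex))"
      using B(1,3) embedding_1[OF \<sigma>] by (intro norm_eigenvalue_le[of B 1 \<sigma>]) auto
    then show ?thesis
      using \<open>D > 0\<close> by (simp add: norm_mult pos_le_divide_eq mult.commute)
  qed
  then show thesis
    by (rule that)
qed

end

definition gevrey_factorial :: "nat \<Rightarrow> nat \<Rightarrow> nat \<Rightarrow> nat" where
  "gevrey_factorial Q P n = fact (n div Q) ^ P"

lemma gevrey_factorial_pos [simp]: "0 < gevrey_factorial Q P n"
  by (simp add: gevrey_factorial_def)

lemma gevrey_factorial_dvd: "j \<le> k \<Longrightarrow> gevrey_factorial Q P j dvd gevrey_factorial Q P k"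
  unfolding gevrey_factorial_def by (intro dvd_power_same fact_dvd div_le_mono)

lemma gevrey_factorial_Suc_dvd:
  "gevrey_factorial Q P (Suc n) dvd gevrey_factorial Q P n * Lcm {1..Suc n} ^ P"
proof -
  have "fact (Suc n div Q) dvd fact (n div Q) * Lcm {1..Suc n}"
  proof (cases "Suc n mod Q = 0")
    case True
    then have "Suc n div Q = Suc (n div Q)"
      by (simp add: div_Suc)
    then have "fact (Suc n div Q) = fact (n div Q) * Suc (n div Q)"
      by simp
    moreover have "Suc (n div Q) dvd Lcm {1..Suc n}"
      by (intro dvd_Lcm) (simp add: div_le_dividend)
    ultimately show ?thesis
      by (simp only: mult_dvd_mono dvd_refl)
  qed (simp add: div_Suc)
  then show ?thesis
    unfolding gevrey_factorial_def by (metis dvd_power_same power_mult_distrib)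
qed

lemma fact_div_le_gevrey_factorial: "1 \<le> P \<Longrightarrow> fact (k div Q) \<le> gevrey_factorial Q P k"
  unfolding gevrey_factorial_def
  by (metis One_nat_def fact_ge_1 power_increasing power_one_right)

lemma fact_mult_gevrey_factorial_le:
  assumes "1 \<le> P"
  shows "fact (j div Q) * gevrey_factorial Q P n \<le> gevrey_factorial Q P (Suc n + j)"
proof -
  have "fact (n div Q) * fact (j div Q) \<le> (fact (n div Q + j div Q) :: nat)"
    by (intro dvd_imp_le fact_fact_dvd_fact) simp
  also have "\<dots> \<le> fact ((Suc n + j) div Q)"
  proof (intro fact_mono)
    have "n div Q + j div Q \<le> (n + j) div Q"
      using div_add1_eq[of n j Q] by linarith
    also have "\<dots> \<le> (Suc n + j) div Q"
      by (intro div_le_mono) simp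
    finally show "n div Q + j div Q \<le> (Suc n + j) div Q" .
  qed
  finally have "gevrey_factorial Q P n * gevrey_factorial Q P j \<le> gevrey_factorial Q P (Suc n + j)"
    unfolding gevrey_factorial_def by (metis power_mono power_mult_distrib zero_le)
  moreover have "fact (j div Q) \<le> gevrey_factorial Q P j"
    by (rule fact_div_le_gevrey_factorial[OF assms])
  ultimately show ?thesis
    by (metis dual_order.trans mult.commute mult_le_mono2)
qed

lemma power_div_fact_le_exp: "0 \<le> (Y :: real) \<Longrightarrow> Y ^ i / fact i \<le> exp Y"
  using sum_le_suminf[of "\<lambda>n. Y ^ n / fact n" "{i}"] exp_converges[of Y]
  by (auto simp: sums_iff divide_inverse mult.commute)

lemma summable_power_div_fact_div:
  fixes X :: real
  assumes "0 < Q" "0 \<le> X"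
  shows "summable (\<lambda>j. X ^ j / fact (j div Q))"
proof -
  define Y where "Y = (2 * (X + 1)) ^ Q"
  have "1 \<le> Y"
    unfolding Y_def using assms(2) by (intro one_le_power) (simp add: algebra_simps)
  \<comment> \<open>with i = j div Q, (2 X)^j is at most Y^(i+1), and Y^i / i! is at most exp Y\<close>
  have bound: "X ^ j / fact (j div Q) \<le> Y * exp Y * (1/2) ^ j" for j
  proof -
    define i where "i = j div Q"
    have "j = i * Q + j mod Q" "j mod Q < Q"
      using assms(1) by (simp_all add: i_def)
    then have "j \<le> Q * Suc i"
      by (simp add: algebra_simps)
    have "Y ^ i \<le> exp Y * fact i"
      using power_div_fact_le_exp[of Y i] \<open>1 \<le> Y\<close> by (simp add: pos_divide_le_eq)
    have "X ^ j * 2 ^ j = (2 * X) ^ j"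
      by (simp add: power_mult_distrib mult.commute)
    also have "\<dots> \<le> (2 * (X + 1)) ^ j"
      using assms(2) by (intro power_mono) auto
    also have "\<dots> \<le> Y ^ Suc i"
      unfolding Y_def power_mult[symmetric] using \<open>j \<le> Q * Suc i\<close> assms(2)
      by (intro power_increasing) auto
    also have "\<dots> \<le> Y * exp Y * fact i"
      using mult_left_mono[OF \<open>Y ^ i \<le> exp Y * fact i\<close>, of Y] \<open>1 \<le> Y\<close> by (simp add: mult.assoc)
    finally have "X ^ j / fact i \<le> Y * exp Y / 2 ^ j"
      by (simp add: pos_divide_le_eq pos_le_divide_eq)
    then show ?thesis
      by (simp add: i_def power_one_over)
  qed
  have "summable (\<lambda>j. Y * exp Y * (1/2) ^ j)"
    by (intro summable_mult summable_geometric) simp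
  then show ?thesis
    by (rule summable_comparison_test'[where N = 0]) (use bound assms(2) in auto)
qed

lemma linear_factor_mult_nth:
  fixes G :: "'a :: comm_ring_1 fps"
  shows "((fps_X - fps_const t) * G) $ 0 = - (t * G $ 0)"
    and "((fps_X - fps_const t) * G) $ Suc n = G $ n - t * G $ Suc n"
  by (simp_all add: left_diff_distrib fps_X_mult_nth)

lemma linear_recurrence_partial_sums:
  fixes f g :: "nat \<Rightarrow> 'a :: comm_ring_1"
  assumes "f 0 = - (t * g 0)" "\<And>n. f (Suc n) = g n - t * g (Suc n)"
  shows "(\<Sum>k\<le>n. f k * t ^ k) = - (t ^ Suc n * g n)"
  by (induction n) (simp_all add: assms algebra_simps)

lemma linear_recurrence_tail:
  fixes f g :: "nat \<Rightarrow> complex"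
  assumes rec: "f 0 = - (t * g 0)" "\<And>n. f (Suc n) = g n - t * g (Suc n)"
    and summable: "summable (\<lambda>k. f k * t ^ k)" and zero: "(\<Sum>k. f k * t ^ k) = 0"
  shows "g n = (\<Sum>j. f (Suc n + j) * t ^ j)"
proof (cases "t = 0")
  case True
  then have "(\<lambda>j. f (Suc n + j) * t ^ j) sums f (Suc n)"
    using sums_single[of 0 "\<lambda>_. f (Suc n)"] by (simp add: power_0_left if_distrib cong: if_cong)
  then show ?thesis
    using rec(2)[of n] True by (simp add: sums_iff)
next
  case False
  have "0 = (\<Sum>j. f (j + Suc n) * t ^ (j + Suc n)) + (\<Sum>k<Suc n. f k * t ^ k)"
    using suminf_split_initial_segment[OF summable, of "Suc n"] zero by simp
  also have "(\<Sum>k<Suc n. f k * t ^ k) = - (t ^ Suc n * g n)"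
    using linear_recurrence_partial_sums[OF rec] by (simp add: lessThan_Suc_atMost)
  also have "(\<lambda>j. f (j + Suc n) * t ^ (j + Suc n)) = (\<lambda>j. t ^ Suc n * (f (Suc n + j) * t ^ j))"
    by (simp add: power_add add.commute mult_ac)
  also have "(\<Sum>j. t ^ Suc n * (f (Suc n + j) * t ^ j)) = t ^ Suc n * (\<Sum>j. f (Suc n + j) * t ^ j)"
  proof (rule suminf_mult)
    have "summable (\<lambda>j. f (j + Suc n) * t ^ (j + Suc n))"
      using summable_ignore_initial_segment[OF summable] .
    also have "(\<lambda>j. f (j + Suc n) * t ^ (j + Suc n)) = (\<lambda>j. t ^ Suc n * (f (Suc n + j) * t ^ j))"
      by (simp add: power_add add.commute mult_ac)
    finally show "summable (\<lambda>j. f (Suc n + j) * t ^ j)"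
      using False by (simp add: summable_cmult_iff)
  qed
  finally show ?thesis
    using False by simp
qed

lemma linear_recurrence_tail_bound:
  fixes f g :: "nat \<Rightarrow> complex"
  assumes "0 < Q" "1 \<le> P" "0 \<le> C" "norm t \<le> T"
    and rec: "f 0 = - (t * g 0)" "\<And>n. f (Suc n) = g n - t * g (Suc n)"
    and zero: "(\<Sum>k. f k * t ^ k) = 0"
    and f_bound: "\<And>k. norm (f k) * gevrey_factorial Q P k \<le> C ^ Suc k"
  shows "norm (g n) * gevrey_factorial Q P n \<le> C\<^sup>2 * (\<Sum>j. (C * T) ^ j / fact (j div Q)) * C ^ n"
proof -
  define \<phi> where "\<phi> k = real (gevrey_factorial Q P k)" for k
  have "0 \<le> T"
    using assms(4) norm_ge_zero order_trans by blast
  define b where "b m j = C ^ Suc (Suc m) * ((C * T) ^ j / fact (j div Q))" for m j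
  have summable_b: "summable (b m)" for m
    unfolding b_def using assms(1,3) \<open>0 \<le> T\<close> by (intro summable_mult summable_power_div_fact_div) auto
  \<comment> \<open>the Gevrey factor of index m + 1 + j absorbs the one of index m and the factorial of j div Q\<close>
  have term_bound: "norm (f (Suc m + j) * t ^ j) * \<phi> m \<le> b m j" for m j
  proof -
    have "\<phi> m * fact (j div Q) \<le> \<phi> (Suc m + j)"
      using fact_mult_gevrey_factorial_le[OF assms(2), of j Q m] unfolding \<phi>_def
      by (metis mult.commute of_nat_fact of_nat_le_iff of_nat_mult)
    then have "norm (f (Suc m + j)) * \<phi> m * fact (j div Q) \<le> norm (f (Suc m + j)) * \<phi> (Suc m + j)"
      by (simp only: mult.assoc mult_left_mono norm_ge_zero)
    also have "\<dots> \<le> C ^ Suc (Suc m) * C ^ j"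
      using f_bound[of "Suc m + j"] by (simp add: \<phi>_def power_add)
    finally have weighted: "norm (f (Suc m + j)) * \<phi> m * fact (j div Q) \<le> C ^ Suc (Suc m) * C ^ j" .
    have "(norm (f (Suc m + j)) * \<phi> m * fact (j div Q)) * norm t ^ j \<le> (C ^ Suc (Suc m) * C ^ j) * T ^ j"
      using assms(3,4) by (intro mult_mono[OF weighted] power_mono) auto
    then have "norm (f (Suc m + j) * t ^ j) * \<phi> m * fact (j div Q) \<le> C ^ Suc (Suc m) * (C * T) ^ j"
      by (simp add: norm_mult norm_power power_mult_distrib mult_ac)
    then show ?thesis
      unfolding b_def times_divide_eq_right by (simp add: pos_le_divide_eq)
  qed
  have tail_bound: "norm (f (Suc m + j) * t ^ j) \<le> b m j" for m j
  proof -
    have "1 \<le> \<phi> m"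
      by (simp add: \<phi>_def Suc_leI)
    then have "norm (f (Suc m + j) * t ^ j) \<le> norm (f (Suc m + j) * t ^ j) * \<phi> m"
      by (metis mult_1_right mult_left_mono norm_ge_zero)
    then show ?thesis
      using term_bound order_trans by blast
  qed
  have "summable (\<lambda>j. f (Suc 0 + j) * t ^ j)"
    by (rule summable_comparison_test'[OF summable_b[of 0], where N = 0]) (use tail_bound[of 0] in simp)
  then have "summable (\<lambda>j. t * (f (Suc j) * t ^ j))"
    by (intro summable_mult) simp
  then have "summable (\<lambda>k. f k * t ^ k)"
    by (subst summable_Suc_iff[symmetric]) (simp add: mult_ac)
  moreover have "summable (\<lambda>j. f (Suc n + j) * t ^ j)"
    by (rule summable_comparison_test'[OF summable_b[of n], where N = 0]) (use tail_bound in auto)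
  ultimately have tail: "g n * of_nat (gevrey_factorial Q P n)
      = (\<Sum>j. f (Suc n + j) * t ^ j * of_nat (gevrey_factorial Q P n))"
    using linear_recurrence_tail[OF rec _ zero] suminf_mult2 by metis
  have "norm (g n) * \<phi> n = norm (\<Sum>j. f (Suc n + j) * t ^ j * of_nat (gevrey_factorial Q P n))"
    unfolding tail[symmetric] by (simp add: \<phi>_def norm_mult)
  also have "\<dots> \<le> suminf (b n)"
    by (rule norm_suminf_le[OF _ summable_b]) (use term_bound in \<open>simp add: \<phi>_def norm_mult\<close>)
  also have "suminf (b n) = C\<^sup>2 * (\<Sum>j. (C * T) ^ j / fact (j div Q)) * C ^ n"
    unfolding b_def using assms(1,3) \<open>0 \<le> T\<close>
    by (subst suminf_mult) (auto intro: summable_power_div_fact_div simp: power2_eq_square mult_ac)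
  finally show ?thesis
    by (simp add: \<phi>_def)
qed

lemma condG_bounds:
  assumes "condG K a"
  obtains C :: real where "1 \<le> C"
    "\<And>n \<sigma>. embedding K \<sigma> \<Longrightarrow> norm (\<sigma> (a n)) \<le> C ^ Suc n"
    "\<And>n. \<exists>d :: nat. 0 < d \<and> real d \<le> C ^ Suc n \<and> (\<forall>k\<le>n. algebraic_int (of_nat d * a k))"
proof -
  from assms obtain C :: real where "0 < C" and C: "\<And>n.
      (\<forall>\<sigma>. embedding K \<sigma> \<longrightarrow> norm (\<sigma> (a n)) \<le> C ^ Suc n) \<and>
      (\<exists>d :: nat. 0 < d \<and> real d \<le> C ^ Suc n \<and> (\<forall>k\<le>n. algebraic_integer (of_nat d * a k)))"
    unfolding condG_def by auto
  have le_max: "C ^ Suc n \<le> max C 1 ^ Suc n" for n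
    using \<open>0 < C\<close> by (intro power_mono) auto
  show thesis
  proof (rule that[of "max C 1"])
    show "norm (\<sigma> (a n)) \<le> max C 1 ^ Suc n" if "embedding K \<sigma>" for n \<sigma>
      using C[of n] that le_max[of n] by (meson order_trans)
    show "\<exists>d :: nat. 0 < d \<and> real d \<le> max C 1 ^ Suc n \<and> (\<forall>k\<le>n. algebraic_int (of_nat d * a k))" for n
    proof -
      obtain d :: nat where "0 < d" "real d \<le> C ^ Suc n" "\<forall>k\<le>n. algebraic_integer (of_nat d * a k)"
        using C[of n] by blast
      then show ?thesis
        using le_max[of n] by (intro exI[of _ d]) (auto simp: algebraic_integer_iff_algebraic_int)
    qed
  qed simp
qed

lemma condG_intro:
  assumes "\<And>n. b n \<in> K"
    and conj: "\<And>n \<sigma>. embedding K \<sigma> \<Longrightarrow> norm (\<sigma> (b n)) \<le> A1 * B1 ^ n"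
    and den: "\<And>n. \<exists>d :: nat. 0 < d \<and> real d \<le> A2 * B2 ^ n \<and> (\<forall>k\<le>n. algebraic_int (of_nat d * b k))"
  shows "condG K b"
proof -
  define C where "C = 1 + \<bar>A1\<bar> + \<bar>B1\<bar> + \<bar>A2\<bar> + \<bar>B2\<bar>"
  have le_C: "A * B ^ n \<le> C ^ (n + 1)" if "\<bar>A\<bar> \<le> C" "\<bar>B\<bar> \<le> C" for A B :: real and n
  proof -
    have "A * B ^ n \<le> \<bar>A\<bar> * \<bar>B\<bar> ^ n"
      by (metis abs_ge_self abs_mult power_abs)
    also have "\<dots> \<le> C * C ^ n"
      using that by (intro mult_mono power_mono) auto
    finally show ?thesis
      by simp
  qed
  have C: "\<bar>A1\<bar> \<le> C" "\<bar>B1\<bar> \<le> C" "\<bar>A2\<bar> \<le> C" "\<bar>B2\<bar> \<le> C" "0 < C"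
    unfolding C_def by auto
  show ?thesis
    unfolding condG_def
  proof (intro conjI allI exI[of _ C] impI)
    show "b n \<in> K" for n
      by (rule assms(1))
    show "norm (\<sigma> (b n)) \<le> C ^ (n + 1)" if "embedding K \<sigma>" for n \<sigma>
      using conj[OF that, of n] le_C[OF C(1,2), of n] by (rule order_trans)
    show "\<exists>d :: nat. 0 < d \<and> real d \<le> C ^ (n + 1) \<and> (\<forall>k\<le>n. algebraic_integer (of_nat d * b k))" for n
    proof -
      obtain d :: nat where "0 < d" "real d \<le> A2 * B2 ^ n" "\<forall>k\<le>n. algebraic_int (of_nat d * b k)"
        using den[of n] by blast
      then show ?thesis
        using le_C[OF C(3,4), of n] by (intro exI[of _ d]) (auto simp: algebraic_integer_iff_algebraic_int)
    qed
  qed (use C in simp)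
qed

definition diff_op :: "nat \<Rightarrow> (nat \<Rightarrow> nat \<Rightarrow> complex) \<Rightarrow> complex fps \<Rightarrow> complex fps" where
  "diff_op m c F = (\<Sum>i\<le>m. \<Sum>j\<le>m. fps_const (c i j) * fps_X ^ i * (fps_deriv ^^ j) F)"

lemma holonomic_iff_diff_op:
  "holonomic K F \<longleftrightarrow> (\<exists>m c. (\<forall>i\<le>m. \<forall>j\<le>m. c i j \<in> K) \<and> (\<exists>i\<le>m. \<exists>j\<le>m. c i j \<noteq> 0) \<and> diff_op m c F = 0)"
  unfolding holonomic_def diff_op_def ..

lemma fps_deriv_iter_X_mult:
  fixes G :: "'a :: comm_ring_1 fps"
  shows "(fps_deriv ^^ j) (fps_X * G) = fps_X * (fps_deriv ^^ j) G + fps_const (of_nat j) * (fps_deriv ^^ (j - 1)) G"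
proof (induction j)
  case (Suc j)
  have "fps_const (of_nat j) * fps_deriv ((fps_deriv ^^ (j - 1)) G) = fps_const (of_nat j) * (fps_deriv ^^ j) G"
    by (cases j) simp_all
  with Suc show ?case
    by (simp add: fps_deriv_mult algebra_simps fps_const_add[symmetric])
qed simp

lemma fps_deriv_iter_diff_const_mult:
  fixes F G :: "'a :: comm_ring_1 fps"
  shows "(fps_deriv ^^ j) (F - fps_const t * G) = (fps_deriv ^^ j) F - fps_const t * (fps_deriv ^^ j) G"
  by (induction j) (simp_all add: fps_deriv_mult_const_left)

lemma diff_op_add_coeffs:
  "diff_op m (\<lambda>i j. a i j + b i j) G = diff_op m a G + diff_op m b G"
  by (simp add: diff_op_def sum.distrib distrib_right flip: fps_const_add)

lemma diff_op_const_mult_coeffs: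
  "diff_op m (\<lambda>i j. t * a i j) G = fps_const t * diff_op m a G"
  by (simp add: diff_op_def sum_distrib_left mult.assoc flip: fps_const_mult)

lemma diff_op_diff_const_mult:
  "diff_op m c (F - fps_const t * G) = diff_op m c F - fps_const t * diff_op m c G"
  unfolding diff_op_def fps_deriv_iter_diff_const_mult
  by (simp add: right_diff_distrib sum_subtractf sum_distrib_left mult_ac)

lemma diff_op_Suc:
  assumes "\<And>i j. m < i \<or> m < j \<Longrightarrow> c i j = 0"
  shows "diff_op (Suc m) c F = diff_op m c F"
  by (simp add: diff_op_def assms)

lemma diff_op_X_mult:
  assumes c: "\<And>i j. m < i \<or> m < j \<Longrightarrow> c i j = 0"
  shows "diff_op m c (fps_X * G)
    = diff_op (Suc m) (\<lambda>i j. (if i = 0 then 0 else c (i - 1) j) + of_nat (Suc j) * c i (Suc j)) G"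
proof -
  define D where "D j = (fps_deriv ^^ j) G" for j
  define S1 where "S1 i = (\<Sum>j\<le>Suc m. fps_const (c i j) * fps_X ^ Suc i * D j)" for i
  define S2 where "S2 i = (\<Sum>j\<le>Suc m. fps_const (of_nat j * c i j) * fps_X ^ i * D (j - 1))" for i
  have "fps_const (c i j) * fps_X ^ i * (fps_deriv ^^ j) (fps_X * G)
      = fps_const (c i j) * fps_X ^ Suc i * D j + fps_const (of_nat j * c i j) * fps_X ^ i * D (j - 1)" for i j
    by (simp only: fps_deriv_iter_X_mult D_def distrib_left power_Suc fps_const_mult[symmetric])
      (simp only: mult_ac)
  then have split: "diff_op (Suc m) c (fps_X * G) = (\<Sum>i\<le>Suc m. S1 i) + (\<Sum>i\<le>Suc m. S2 i)"
    by (simp only: diff_op_def S1_def S2_def sum.distrib)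
  \<comment> \<open>multiplication by X shifts the first index, differentiation of the factor X the second\<close>
  have shift1: "(\<Sum>i\<le>Suc m. S1 i) = diff_op (Suc m) (\<lambda>i j. if i = 0 then 0 else c (i - 1) j) G"
  proof -
    have "(\<Sum>i\<le>Suc m. S1 i) = (\<Sum>i\<le>m. S1 i)"
      by (simp add: S1_def c)
    also have "\<dots> = diff_op (Suc m) (\<lambda>i j. if i = 0 then 0 else c (i - 1) j) G"
      unfolding diff_op_def S1_def D_def by (subst (2) sum.atMost_Suc_shift) simp
    finally show ?thesis .
  qed
  have "S2 i = (\<Sum>j\<le>Suc m. fps_const (of_nat (Suc j) * c i (Suc j)) * fps_X ^ i * D j)" for i
  proof -
    have "S2 i = (\<Sum>j\<le>m. fps_const (of_nat (Suc j) * c i (Suc j)) * fps_X ^ i * D j)"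
      unfolding S2_def by (subst sum.atMost_Suc_shift) simp
    also have "\<dots> = (\<Sum>j\<le>Suc m. fps_const (of_nat (Suc j) * c i (Suc j)) * fps_X ^ i * D j)"
      by (simp add: c)
    finally show ?thesis .
  qed
  then have shift2: "(\<Sum>i\<le>Suc m. S2 i) = diff_op (Suc m) (\<lambda>i j. of_nat (Suc j) * c i (Suc j)) G"
    by (simp add: diff_op_def D_def)
  have "diff_op m c (fps_X * G) = diff_op (Suc m) c (fps_X * G)"
    by (rule diff_op_Suc[OF c, symmetric])
  also have "\<dots> = diff_op (Suc m) (\<lambda>i j. if i = 0 then 0 else c (i - 1) j) G
      + diff_op (Suc m) (\<lambda>i j. of_nat (Suc j) * c i (Suc j)) G"
    unfolding split shift1 shift2 ..
  also have "\<dots> = diff_op (Suc m) (\<lambda>i j. (if i = 0 then 0 else c (i - 1) j) + of_nat (Suc j) * c i (Suc j)) G"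
    by (rule diff_op_add_coeffs[symmetric])
  finally show ?thesis .
qed

lemma holonomic_linear_quotient:
  assumes K: "number_field K" and "\<xi> \<in> K" and "holonomic K F"
    and G: "(fps_X - fps_const \<xi>) * G = F"
  shows "holonomic K G"
proof -
  obtain m c where cK: "\<forall>i\<le>m. \<forall>j\<le>m. c i j \<in> K" and c_nz: "\<exists>i\<le>m. \<exists>j\<le>m. c i j \<noteq> 0"
    and L: "diff_op m c F = 0"
    using assms(3) unfolding holonomic_iff_diff_op by blast
  define c0 where "c0 i j = (if i \<le> m \<and> j \<le> m then c i j else 0)" for i j
  have c0: "\<And>i j. m < i \<or> m < j \<Longrightarrow> c0 i j = 0"
    by (auto simp: c0_def)
  have "diff_op m c0 F = diff_op m c F"
    by (simp add: diff_op_def c0_def)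
  \<comment> \<open>composing the operator with multiplication by X - \<xi> gives an operator annihilating G\<close>
  define c' where "c' i j = (if i = 0 then 0 else c0 (i - 1) j) + of_nat (Suc j) * c0 i (Suc j) + (- \<xi>) * c0 i j"
    for i j
  have "diff_op (Suc m) c' G = diff_op (Suc m) (\<lambda>i j. (if i = 0 then 0 else c0 (i - 1) j)
      + of_nat (Suc j) * c0 i (Suc j)) G + diff_op (Suc m) (\<lambda>i j. (- \<xi>) * c0 i j) G"
    unfolding c'_def by (rule diff_op_add_coeffs)
  also have "\<dots> = diff_op m c0 (fps_X * G) - fps_const \<xi> * diff_op m c0 G"
    by (simp only: diff_op_X_mult[OF c0] diff_op_const_mult_coeffs diff_op_Suc[OF c0]) (simp flip: fps_const_neg)
  also have "\<dots> = diff_op m c0 (fps_X * G - fps_const \<xi> * G)"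
    by (rule diff_op_diff_const_mult[symmetric])
  also have "fps_X * G - fps_const \<xi> * G = F"
    using G by (simp add: left_diff_distrib)
  also have "diff_op m c0 F = diff_op m c F"
    by fact
  finally have "diff_op (Suc m) c' G = 0"
    using L by simp
  moreover have "\<forall>i\<le>Suc m. \<forall>j\<le>Suc m. c' i j \<in> K"
  proof (intro allI impI)
    fix i j
    have c0K: "c0 i' j' \<in> K" for i' j'
      using cK by (simp add: c0_def number_field_0[OF K])
    moreover have "(if i = 0 then 0 else c0 (i - 1) j) \<in> K"
      using c0K number_field_0[OF K] by simp
    ultimately show "c' i j \<in> K"
      unfolding c'_def using assms(2)
      by (intro number_field_add[OF K] number_field_mult[OF K] number_field_minus[OF K] number_field_of_nat[OF K])
  qed
  moreover have "\<exists>i\<le>Suc m. \<exists>j\<le>Suc m. c' i j \<noteq> 0"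
  proof -
    \<comment> \<open>the top nonzero row of c reappears, shifted by one, as a row of c'\<close>
    define R where "R = {i. i \<le> m \<and> (\<exists>j\<le>m. c i j \<noteq> 0)}"
    define I where "I = Max R"
    have "finite R"
      unfolding R_def by (rule finite_subset[of _ "{..m}"]) auto
    moreover have "R \<noteq> {}"
      using c_nz unfolding R_def by blast
    ultimately have "I \<in> R"
      unfolding I_def by (rule Max_in)
    then obtain j where j: "I \<le> m" "j \<le> m" "c I j \<noteq> 0"
      unfolding R_def by blast
    have row: "c0 (Suc I) j' = 0" for j'
    proof (rule ccontr)
      assume "c0 (Suc I) j' \<noteq> 0"
      then have "Suc I \<in> R"
        unfolding R_def c0_def by (auto split: if_splits)
      then have "Suc I \<le> I"
        unfolding I_def by (rule Max_ge[OF \<open>finite R\<close>])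
      then show False
        by simp
    qed
    have "c' (Suc I) j = c0 I j"
      by (simp add: c'_def row)
    also have "c0 I j = c I j"
      using j by (simp add: c0_def)
    finally have "c' (Suc I) j \<noteq> 0"
      using j by simp
    with j show ?thesis
      by (intro exI[of _ "Suc I"] conjI exI[of _ j]) simp_all
  qed
  ultimately show ?thesis
    unfolding holonomic_iff_diff_op by blast
qed

lemma linear_quotient_exists:
  fixes F :: "complex fps"
  assumes "\<xi> \<noteq> 0 \<or> F $ 0 = 0"
  obtains G where "(fps_X - fps_const \<xi>) * G = F"
proof (cases "\<xi> = 0")
  case True
  have "(fps_X - fps_const \<xi>) * Abs_fps (\<lambda>n. F $ Suc n) = F"
  proof (rule fps_ext)
    fix n show "((fps_X - fps_const \<xi>) * Abs_fps (\<lambda>n. F $ Suc n)) $ n = F $ n"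
      using assms True by (cases n) (simp_all add: linear_factor_mult_nth)
  qed
  then show thesis ..
next
  case False
  then have "(fps_X - fps_const \<xi>) * (inverse (fps_X - fps_const \<xi>) * F) = F"
    by (simp add: mult.assoc[symmetric] inverse_mult_eq_1' del: fps_const_neg)
  then show thesis ..
qed

lemma linear_quotient_coeffs_in:
  assumes K: "number_field K" and "\<xi> \<in> K" and FK: "\<And>n. F $ n \<in> K"
    and G: "(fps_X - fps_const \<xi>) * G = F"
  shows "G $ n \<in> K"
proof (cases "\<xi> = 0")
  case True
  have "F $ Suc n = G $ n - \<xi> * G $ Suc n"
    using linear_factor_mult_nth(2)[of \<xi> G n] by (simp only: G)
  with True have "F $ Suc n = G $ n"
    by simp
  then show ?thesis
    using FK[of "Suc n"] by simp
next
  case False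
  have "(\<Sum>k\<le>n. F $ k * \<xi> ^ k) = - (\<xi> ^ Suc n * G $ n)"
    using G by (intro linear_recurrence_partial_sums) (auto simp: linear_factor_mult_nth)
  then have "G $ n = - (\<Sum>k\<le>n. F $ k * \<xi> ^ k) / \<xi> ^ Suc n"
    using False by (simp add: field_simps)
  then show ?thesis
    using assms by (auto intro!: number_field_divide number_field_minus number_field_sum
        number_field_mult number_field_power)
qed

lemma conjugates_linear_quotient:
  fixes K :: "complex set" and F G :: "complex fps"
  assumes K: "number_field K" and \<xi>: "\<xi> \<in> K" and "0 < Q" "1 \<le> P" "0 \<le> C"
    and F_bound: "\<And>n \<sigma>. embedding K \<sigma> \<Longrightarrow> norm (\<sigma> (F $ n * of_nat (gevrey_factorial Q P n))) \<le> C ^ Suc n"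
    and FK: "\<And>n. F $ n \<in> K" and G: "(fps_X - fps_const \<xi>) * G = F"
    and vanish: "\<And>\<sigma>. embedding K \<sigma> \<Longrightarrow> (\<Sum>n. \<sigma> (F $ n) * \<sigma> \<xi> ^ n) = 0"
  obtains A B where "\<And>n \<sigma>. embedding K \<sigma> \<Longrightarrow> norm (\<sigma> (G $ n * of_nat (gevrey_factorial Q P n))) \<le> A * B ^ n"
proof -
  obtain T where T: "\<And>\<sigma>. embedding K \<sigma> \<Longrightarrow> norm (\<sigma> \<xi>) \<le> T"
    using number_field_conjugates_bounded[OF K \<xi>] by blast
  have GK: "G $ n \<in> K" for n
    by (rule linear_quotient_coeffs_in[OF K \<xi> FK G])
  have "norm (\<sigma> (G $ n * of_nat (gevrey_factorial Q P n)))
      \<le> C\<^sup>2 * (\<Sum>j. (C * T) ^ j / fact (j div Q)) * C ^ n"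
    if \<sigma>: "embedding K \<sigma>" for \<sigma> n
  proof -
    note emb = embedding_mult[OF K \<sigma>] embedding_of_nat[OF K \<sigma>] embedding_minus[OF K \<sigma>]
      embedding_diff[OF K \<sigma>] number_field_mult[OF K] number_field_of_nat[OF K]
    have "norm (\<sigma> (G $ n)) * gevrey_factorial Q P n \<le> C\<^sup>2 * (\<Sum>j. (C * T) ^ j / fact (j div Q)) * C ^ n"
    proof (rule linear_recurrence_tail_bound[where f = "\<lambda>k. \<sigma> (F $ k)" and t = "\<sigma> \<xi>"])
      show "\<sigma> (F $ 0) = - (\<sigma> \<xi> * \<sigma> (G $ 0))"
        using G \<xi> GK by (auto simp: linear_factor_mult_nth emb)
      show "\<sigma> (F $ Suc k) = \<sigma> (G $ k) - \<sigma> \<xi> * \<sigma> (G $ Suc k)" for k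
        using G \<xi> GK by (auto simp: linear_factor_mult_nth emb)
      show "norm (\<sigma> (F $ k)) * gevrey_factorial Q P k \<le> C ^ Suc k" for k
        using F_bound[OF \<sigma>, of k] FK by (simp add: emb norm_mult)
    qed (use assms T[OF \<sigma>] vanish[OF \<sigma>] in auto)
    then show ?thesis
      using GK by (simp add: emb norm_mult)
  qed
  then show thesis
    by (rule that)
qed

lemma denominators_linear_quotient_zero:
  fixes F G :: "complex fps"
  assumes "1 \<le> C"
    and den: "\<And>n. \<exists>d :: nat. 0 < d \<and> real d \<le> C ^ Suc n \<and>
      (\<forall>k\<le>n. algebraic_int (of_nat d * (F $ k * of_nat (gevrey_factorial Q P k))))"
    and G: "fps_X * G = F"
  obtains A B where "\<And>n. \<exists>d :: nat. 0 < d \<and> real d \<le> A * B ^ n \<and>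
      (\<forall>k\<le>n. algebraic_int (of_nat d * (G $ k * of_nat (gevrey_factorial Q P k))))"
proof -
  define \<phi> where "\<phi> = gevrey_factorial Q P"
  have "\<exists>d :: nat. 0 < d \<and> real d \<le> (C\<^sup>2 * 16 ^ P) * (C * 16 ^ P) ^ n \<and>
      (\<forall>k\<le>n. algebraic_int (of_nat d * (G $ k * of_nat (\<phi> k))))" for n
  proof -
    obtain d :: nat where d: "0 < d" "real d \<le> C ^ Suc (Suc n)"
      and d_int: "\<And>k. k \<le> Suc n \<Longrightarrow> algebraic_int (of_nat d * (F $ k * of_nat (\<phi> k)))"
      using den[of "Suc n"] unfolding \<phi>_def by blast
    define L where "L = Lcm {1..Suc n}"
    have G_shift: "F $ Suc k = G $ k" for k
      unfolding G[symmetric] by (simp add: fps_X_mult_nth)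
    \<comment> \<open>passing from index k + 1 to k, the Gevrey factor loses at most a divisor of L^P\<close>
    have "algebraic_int (of_nat (d * L ^ P) * (G $ k * of_nat (\<phi> k)))" if "k \<le> n" for k
    proof -
      have "\<phi> (Suc k) dvd \<phi> k * Lcm {1..Suc k} ^ P"
        unfolding \<phi>_def by (rule gevrey_factorial_Suc_dvd)
      also have "\<dots> dvd \<phi> k * L ^ P"
        unfolding L_def using that by (intro mult_dvd_mono dvd_refl dvd_power_same Lcm_subset) auto
      finally have L_eq: "\<phi> k * L ^ P = \<phi> (Suc k) * (\<phi> k * L ^ P div \<phi> (Suc k))"
        by simp
      have "of_nat (d * L ^ P) * (G $ k * of_nat (\<phi> k))
          = of_nat d * (F $ Suc k * of_nat (\<phi> k * L ^ P))"
        using G_shift by (simp add: mult_ac)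
      also have "\<dots> = of_nat d * (F $ Suc k * of_nat (\<phi> (Suc k))) * of_nat (\<phi> k * L ^ P div \<phi> (Suc k))"
        by (subst L_eq) (simp add: mult_ac)
      finally show ?thesis
        using d_int[of "Suc k"] that by (metis Suc_le_mono algebraic_int_add_mult(2) algebraic_int_of_nat)
    qed
    moreover have "real (d * L ^ P) \<le> (C\<^sup>2 * 16 ^ P) * (C * 16 ^ P) ^ n"
    proof -
      have "real L \<le> real (16 ^ Suc n)"
        unfolding L_def of_nat_le_iff by (rule Lcm_atLeastAtMost_le)
      then have "real L \<le> 16 ^ Suc n"
        by simp
      then have "real L ^ P \<le> (16 ^ Suc n) ^ P"
        by (intro power_mono) auto
      also have "\<dots> = (16 ^ P) ^ Suc n"
        by (metis power_mult mult.commute)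
      finally have "real L ^ P \<le> (16 ^ P) ^ Suc n" .
      then have "real d * real L ^ P \<le> C ^ Suc (Suc n) * (16 ^ P) ^ Suc n"
        using d(2) assms(1) by (intro mult_mono) auto
      then show ?thesis
        by (simp add: power_mult_distrib power2_eq_square mult_ac)
    qed
    ultimately show ?thesis
      using d(1) Lcm_atLeastAtMost_pos[of "Suc n"] by (intro exI[of _ "d * L ^ P"]) (auto simp: L_def)
  qed
  then show thesis
    unfolding \<phi>_def by (rule that)
qed

lemma denominators_linear_quotient_nonzero:
  fixes K :: "complex set" and F G :: "complex fps"
  assumes K: "number_field K" and \<xi>: "\<xi> \<in> K" "\<xi> \<noteq> 0" and "0 \<le> C"
    and den: "\<And>n. \<exists>d :: nat. 0 < d \<and> real d \<le> C ^ Suc n \<and>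
      (\<forall>k\<le>n. algebraic_int (of_nat d * (F $ k * of_nat (gevrey_factorial Q P k))))"
    and G: "(fps_X - fps_const \<xi>) * G = F"
  obtains A B where "\<And>n. \<exists>d :: nat. 0 < d \<and> real d \<le> A * B ^ n \<and>
      (\<forall>k\<le>n. algebraic_int (of_nat d * (G $ k * of_nat (gevrey_factorial Q P k))))"
proof -
  define u where "u = inverse \<xi>"
  obtain D :: nat where "0 < D" and D: "algebraic_int (of_nat D * u)"
    using number_field_denominator[OF K number_field_inverse[OF K \<xi>(1)]] unfolding u_def by blast
  define \<phi> where "\<phi> = gevrey_factorial Q P"
  have \<xi>u: "\<xi> ^ j * u ^ j = 1" for j
    using \<xi>(2) by (simp add: u_def power_mult_distrib[symmetric])
  \<comment> \<open>G $ k = - (\<Sum>j\<le>k. F $ j * \<xi> ^ j) * u ^ (k + 1), and \<phi> j divides \<phi> k for j \<le> k\<close>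
  have G_expansion: "G $ k * of_nat (\<phi> k)
      = - (\<Sum>j\<le>k. F $ j * of_nat (\<phi> j) * of_nat (\<phi> k div \<phi> j) * u ^ (Suc k - j))" for k
  proof -
    have partial: "(\<Sum>j\<le>k. F $ j * \<xi> ^ j) = - (\<xi> ^ Suc k * G $ k)"
      using G by (intro linear_recurrence_partial_sums) (auto simp: linear_factor_mult_nth)
    have summand: "F $ j * \<xi> ^ j * u ^ Suc k * of_nat (\<phi> k)
        = F $ j * of_nat (\<phi> j) * of_nat (\<phi> k div \<phi> j) * u ^ (Suc k - j)" if "j \<le> k" for j
    proof -
      have "u ^ Suc k = u ^ j * u ^ (Suc k - j)"
        using that by (simp flip: power_add)
      moreover have "of_nat (\<phi> k) = (of_nat (\<phi> j * (\<phi> k div \<phi> j)) :: complex)"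
        using gevrey_factorial_dvd[OF that] unfolding \<phi>_def by simp
      ultimately show ?thesis
        using \<xi>u[of j] by (simp add: mult_ac)
    qed
    have "G $ k * of_nat (\<phi> k) = - ((\<Sum>j\<le>k. F $ j * \<xi> ^ j) * u ^ Suc k * of_nat (\<phi> k))"
      using \<xi>u[of "Suc k"] by (simp add: partial mult_ac)
    also have "\<dots> = - (\<Sum>j\<le>k. F $ j * \<xi> ^ j * u ^ Suc k * of_nat (\<phi> k))"
      by (simp add: sum_distrib_right)
    also have "\<dots> = - (\<Sum>j\<le>k. F $ j * of_nat (\<phi> j) * of_nat (\<phi> k div \<phi> j) * u ^ (Suc k - j))"
      by (intro arg_cong[where f = uminus] sum.cong refl summand) simp
    finally show ?thesis .
  qed
  have "\<exists>d :: nat. 0 < d \<and> real d \<le> (C * D) * (C * D) ^ n \<and>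
      (\<forall>k\<le>n. algebraic_int (of_nat d * (G $ k * of_nat (\<phi> k))))" for n
  proof -
    obtain d :: nat where d: "0 < d" "real d \<le> C ^ Suc n"
      and d_int: "\<And>k. k \<le> n \<Longrightarrow> algebraic_int (of_nat d * (F $ k * of_nat (\<phi> k)))"
      using den[of n] unfolding \<phi>_def by blast
    have "algebraic_int (of_nat (d * D ^ Suc n) * (G $ k * of_nat (\<phi> k)))" if "k \<le> n" for k
    proof -
      have "of_nat (d * D ^ Suc n) * (G $ k * of_nat (\<phi> k)) = - (\<Sum>j\<le>k. of_nat (d * D ^ Suc n)
          * (F $ j * of_nat (\<phi> j) * of_nat (\<phi> k div \<phi> j) * u ^ (Suc k - j)))"
        by (simp add: G_expansion sum_distrib_left)
      also have "\<dots> = - (\<Sum>j\<le>k. (of_nat d * (F $ j * of_nat (\<phi> j))) * of_nat (\<phi> k div \<phi> j)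
          * of_nat D ^ (n - k + j) * (of_nat D * u) ^ (Suc k - j))"
      proof (intro arg_cong[where f = uminus] sum.cong refl)
        fix j assume "j \<in> {..k}"
        then have "(of_nat D :: complex) ^ Suc n = of_nat D ^ (n - k + j) * of_nat D ^ (Suc k - j)"
          using \<open>k \<le> n\<close> by (simp flip: power_add)
        then show "of_nat (d * D ^ Suc n) * (F $ j * of_nat (\<phi> j) * of_nat (\<phi> k div \<phi> j) * u ^ (Suc k - j))
            = of_nat d * (F $ j * of_nat (\<phi> j)) * of_nat (\<phi> k div \<phi> j)
              * of_nat D ^ (n - k + j) * (of_nat D * u) ^ (Suc k - j)"
          unfolding of_nat_mult of_nat_power by (simp add: power_mult_distrib mult_ac)
      qed
      finally have expansion: "of_nat (d * D ^ Suc n) * (G $ k * of_nat (\<phi> k)) = - (\<Sum>j\<le>k. (of_nat d * (F $ j * of_nat (\<phi> j)))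
          * of_nat (\<phi> k div \<phi> j) * of_nat D ^ (n - k + j) * (of_nat D * u) ^ (Suc k - j))" .
      show ?thesis
        unfolding expansion algebraic_int_minus_iff
      proof (rule algebraic_int_sum)
        fix j assume "j \<in> {..k}"
        then have "algebraic_int (of_nat d * (F $ j * of_nat (\<phi> j)))"
          using d_int that by auto
        then show "algebraic_int (of_nat d * (F $ j * of_nat (\<phi> j)) * of_nat (\<phi> k div \<phi> j)
            * of_nat D ^ (n - k + j) * (of_nat D * u) ^ (Suc k - j))"
          by (metis D algebraic_int_add_mult(2) algebraic_int_power algebraic_int_of_nat)
      qed
    qed
    moreover have "real (d * D ^ Suc n) \<le> (C * D) * (C * D) ^ n"
    proof -
      have "real (d * D ^ Suc n) = real d * real D ^ Suc n"
        by simp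
      also have "\<dots> \<le> C ^ Suc n * real D ^ Suc n"
        using d(2) by (intro mult_right_mono) auto
      also have "\<dots> = (C * D) * (C * D) ^ n"
        unfolding power_mult_distrib[symmetric] by (rule power_Suc)
      finally show ?thesis .
    qed
    ultimately show ?thesis
      using d(1) \<open>0 < D\<close> by (intro exI[of _ "d * D ^ Suc n"]) auto
  qed
  then show thesis
    unfolding \<phi>_def by (rule that)
qed

lemma gevrey_arith_iff_condG:
  assumes "quotient_of s = (- int P, int Q)"
  shows "gevrey_arith K s H \<longleftrightarrow> condG K (\<lambda>n. H $ n * of_nat (gevrey_factorial Q P n))"
proof -
  have coeff: "H $ n = fact (n div Q) powi (- int P) * b n \<longleftrightarrow> H $ n * of_nat (gevrey_factorial Q P n) = b n"
    for b :: "nat \<Rightarrow> complex" and n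
  proof -
    have inv: "fact (n div Q) powi (- int P) = inverse (of_nat (gevrey_factorial Q P n) :: complex)"
      by (simp add: gevrey_factorial_def power_int_minus)
    have "(of_nat (gevrey_factorial Q P n) :: complex) \<noteq> 0"
      by simp
    then show ?thesis
      unfolding inv by (simp add: field_simps)
  qed
  have "gevrey_arith K s H \<longleftrightarrow> (\<exists>b. condG K b \<and> (\<forall>n. H $ n * of_nat (gevrey_factorial Q P n) = b n))"
    unfolding gevrey_arith_def assms by (simp add: coeff)
  also have "\<dots> \<longleftrightarrow> condG K (\<lambda>n. H $ n * of_nat (gevrey_factorial Q P n))"
    by (auto simp: fun_eq_iff[symmetric])
  finally show ?thesis .
qed

lemma condG_coeffs_in:
  assumes "number_field K" "condG K (\<lambda>n. F $ n * of_nat (gevrey_factorial Q P n))"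
  shows "F $ n \<in> K"
proof -
  have "F $ n * of_nat (gevrey_factorial Q P n) / of_nat (gevrey_factorial Q P n) \<in> K"
    using assms unfolding condG_def by (blast intro: number_field_divide number_field_of_nat)
  then show ?thesis
    by simp
qed

lemma condG_linear_quotient:
  fixes K :: "complex set" and F G :: "complex fps"
  assumes K: "number_field K" and \<xi>: "\<xi> \<in> K" and "0 < Q" "1 \<le> P"
    and F: "condG K (\<lambda>n. F $ n * of_nat (gevrey_factorial Q P n))"
    and G: "(fps_X - fps_const \<xi>) * G = F"
    and vanish: "\<And>\<sigma>. embedding K \<sigma> \<Longrightarrow> (\<Sum>n. \<sigma> (F $ n) * \<sigma> \<xi> ^ n) = 0"
  shows "condG K (\<lambda>n. G $ n * of_nat (gevrey_factorial Q P n))"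
proof -
  obtain C where "1 \<le> C"
    and conj: "\<And>n \<sigma>. embedding K \<sigma> \<Longrightarrow> norm (\<sigma> (F $ n * of_nat (gevrey_factorial Q P n))) \<le> C ^ Suc n"
    and den: "\<And>n. \<exists>d :: nat. 0 < d \<and> real d \<le> C ^ Suc n \<and>
      (\<forall>k\<le>n. algebraic_int (of_nat d * (F $ k * of_nat (gevrey_factorial Q P k))))"
    using condG_bounds[OF F] by blast
  have FK: "F $ n \<in> K" for n
    by (rule condG_coeffs_in[OF K F])
  obtain A1 B1 where conj_G:
    "\<And>n \<sigma>. embedding K \<sigma> \<Longrightarrow> norm (\<sigma> (G $ n * of_nat (gevrey_factorial Q P n))) \<le> A1 * B1 ^ n"
  proof (rule conjugates_linear_quotient[where F = F and G = G and Q = Q and P = P and C = C,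
        OF K \<xi> assms(3,4) _ _ FK G])
    show "0 \<le> C"
      using \<open>1 \<le> C\<close> by simp
    show "norm (\<sigma> (F $ n * of_nat (gevrey_factorial Q P n))) \<le> C ^ Suc n" if "embedding K \<sigma>" for n \<sigma>
      using conj[OF that] .
    show "(\<Sum>n. \<sigma> (F $ n) * \<sigma> \<xi> ^ n) = 0" if "embedding K \<sigma>" for \<sigma>
      using vanish[OF that] .
  qed (rule that)
  obtain A2 B2 where den_G: "\<And>n. \<exists>d :: nat. 0 < d \<and> real d \<le> A2 * B2 ^ n \<and>
      (\<forall>k\<le>n. algebraic_int (of_nat d * (G $ k * of_nat (gevrey_factorial Q P k))))"
  proof (cases "\<xi> = 0")
    case True
    with G have "fps_X * G = F"
      by simp
    then show thesis
      using denominators_linear_quotient_zero[where F = F and G = G and Q = Q and P = P and C = C, OF \<open>1 \<le> C\<close> den] that by blast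
  next
    case False
    then show thesis
      using denominators_linear_quotient_nonzero[where F = F and G = G and Q = Q and P = P and C = C, OF K \<xi> False _ den G] \<open>1 \<le> C\<close> that by auto
  qed
  show ?thesis
  proof (rule condG_intro[where b = "\<lambda>n. G $ n * of_nat (gevrey_factorial Q P n)"])
    show "G $ n * of_nat (gevrey_factorial Q P n) \<in> K" for n
      using linear_quotient_coeffs_in[OF K \<xi> FK G]
      by (intro number_field_mult[OF K] number_field_of_nat[OF K])
    show "norm (\<sigma> (G $ n * of_nat (gevrey_factorial Q P n))) \<le> A1 * B1 ^ n"
      if "embedding K \<sigma>" for n \<sigma>
      using conj_G[OF that] .
    show "\<exists>d :: nat. 0 < d \<and> real d \<le> A2 * B2 ^ n \<and>
        (\<forall>k\<le>n. algebraic_int (of_nat d * (G $ k * of_nat (gevrey_factorial Q P k))))" for n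
      by (rule den_G)
  qed
qed

theorem lemma2p1p2:
  fixes K :: "complex set" and \<xi> :: complex and s :: rat and F :: "complex fps"
  assumes "number_field K"
    and "\<xi> \<in> K"
    and "s < 0"
    and "gevrey_arith K s F"
    and "holonomic K F"
    and "\<And>\<sigma>. embedding K \<sigma> \<Longrightarrow> (\<Sum>n. \<sigma> (fps_nth F n) * \<sigma> \<xi> ^ n) = 0"
  shows "(\<exists>G. (\<forall>n. fps_nth G n \<in> K) \<and> (fps_X - fps_const \<xi>) * G = F) \<and>
         (\<forall>G. (fps_X - fps_const \<xi>) * G = F \<longrightarrow> gevrey_arith K s G \<and> holonomic K G)"
proof -
  obtain p q where pq: "quotient_of s = (p, q)"
    by fastforce
  have "0 < q"
    using pq by (rule quotient_of_denom_pos)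
  moreover have "p < 0"
    using \<open>s < 0\<close> \<open>0 < q\<close> quotient_of_div[OF pq] by (simp add: divide_less_0_iff)
  ultimately have s: "quotient_of s = (- int (nat (- p)), int (nat q))" "0 < nat q" "1 \<le> nat (- p)"
    using pq by auto
  note gevrey = gevrey_arith_iff_condG[OF s(1)]
  have F: "condG K (\<lambda>n. F $ n * of_nat (gevrey_factorial (nat q) (nat (- p)) n))"
    using assms(4) gevrey by blast
  have FK: "F $ n \<in> K" for n
    by (rule condG_coeffs_in[OF assms(1) F])
  have "\<xi> \<noteq> 0 \<or> F $ 0 = 0"
    using assms(6)[of "\<lambda>x. x"] by (auto simp: embedding_def)
  then obtain G0 where G0: "(fps_X - fps_const \<xi>) * G0 = F"
    by (rule linear_quotient_exists)
  show ?thesis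
  proof (intro conjI exI[of _ G0] allI impI)
    show "fps_nth G0 n \<in> K" for n
      by (rule linear_quotient_coeffs_in[OF assms(1,2) FK G0])
    show "(fps_X - fps_const \<xi>) * G0 = F"
      by (rule G0)
    fix G assume G: "(fps_X - fps_const \<xi>) * G = F"
    show "gevrey_arith K s G"
      unfolding gevrey by (rule condG_linear_quotient[OF assms(1,2) s(2,3) F G assms(6)])
    show "holonomic K G"
      by (rule holonomic_linear_quotient[OF assms(1,2,5) G])
  qed
qed

end
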